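(* Let $\varepsilon>0$, $s\le d$, let $U\in\mathbb R^{d\times s}$ satisfy $U^\top U=I_s$, and let $v\in\mathbb R^d$. Let $X$ and $Y$ be random vectors in $\mathbb R^s$ and $\mathbb R^d$ respectively with finite second moments. Then \[ \mathrm{OT}_{c,\varepsilon}(UX+v,Y)=\mathrm{OT}_{c,\varepsilon}(X,U^\top(Y-v))+\mathbb E\big[\|(I_d-UU^\top)(Y-v)\|_2^2\big], \] where on each side $c$ is the squared Euclidean distance $c(x,y)=\|x-y\|_2^2$ on the respective space ($\mathbb R^d$ on the left, $\mathbb R^s$ on the right).
   Context: For random vectors $X',Y'$ with laws $\mu,\nu$, $\mathrm{OT}_{c,\varepsilon}(X',Y')=\mathrm{OT}_{c,\varepsilon}(\mu,\nu)=\inf_{\pi\in\Pi(\mu,\nu)}\int c\,d\pi+\varepsilon\,\mathrm{KL}(\pi\mid\mu\otimes\nu)$, where $\Pi(\mu,\nu)$ is the set of couplings and $\mathrm{KL}(\pi\mid\rho)=\int\log(d\pi/d\rho)\,d\pi$ if $\pi\ll\rho$ and $+\infty$ otherwise. *)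

theory Defs
  imports "HOL-Probability.Probability"
begin

definition couplings :: "'a measure \<Rightarrow> 'b measure \<Rightarrow> ('a \<times> 'b) measure set" where
  "couplings \<mu> \<nu> = {\<pi>. sets \<pi> = sets (\<mu> \<Otimes>\<^sub>M \<nu>) \<and> prob_space \<pi> \<and>
      distr \<pi> \<mu> fst = \<mu> \<and> distr \<pi> \<nu> snd = \<nu>}"

text \<open>The negative part of log(d pi/d rho) is always pi-integrable
  for finite rho, so non-integrability means the integral is +infinity.\<close>
definition KL_div :: "'a measure \<Rightarrow> 'a measure \<Rightarrow> ereal" where
  "KL_div \<pi> \<rho> =
     (if absolutely_continuous \<rho> \<pi> \<and> integrable \<pi> (\<lambda>z. ln (enn2real (RN_deriv \<rho> \<pi> z)))
      then ereal (\<integral>z. ln (enn2real (RN_deriv \<rho> \<pi> z)) \<partial>\<pi>)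
      else \<infinity>)"

text \<open>Transport cost int c d pi (taken as +infinity when c is not pi-integrable;
  this is exact for nonnegative costs such as the squared distance).\<close>
definition cost_integral :: "('a \<times> 'b) measure \<Rightarrow> ('a \<Rightarrow> 'b \<Rightarrow> real) \<Rightarrow> ereal" where
  "cost_integral \<pi> c =
     (if integrable \<pi> (\<lambda>z. c (fst z) (snd z)) then ereal (\<integral>z. c (fst z) (snd z) \<partial>\<pi>) else \<infinity>)"

definition OT_ent :: "('a \<Rightarrow> 'b \<Rightarrow> real) \<Rightarrow> real \<Rightarrow> 'a measure \<Rightarrow> 'b measure \<Rightarrow> ereal" where
  "OT_ent c \<epsilon> \<mu> \<nu> =
     (INF \<pi> \<in> couplings \<mu> \<nu>. cost_integral \<pi> c + ereal \<epsilon> * KL_div \<pi> (\<mu> \<Otimes>\<^sub>M \<nu>))"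

definition sqdist :: "'a::real_normed_vector \<Rightarrow> 'a \<Rightarrow> real" where
  "sqdist x y = (norm (x - y))\<^sup>2"

end

theory Submission
  imports Defs
begin

(* Write T y = U^T (y - v) and h a = U a + v. Because U has orthonormal columns, Pythagoras gives
   |h a - y|^2 = |a - T y|^2 + |(I - U U^T)(y - v)|^2, and T inverts h on the support of the law
   of U X + v. Pushing a coupling of (U X + v, Y) forward along T x T therefore removes exactly
   E |(I - U U^T)(Y - v)|^2 from the transport cost and, by the data processing inequality,
   does not increase the KL term. Conversely, a coupling Q' of (X, T Y) with finite entropy lifts
   to the coupling with density (dQ'/d(law X x law T Y)) o (T x T) against the original product:
   its first marginal is right because T is injective on the support, its second by Fubini, and
   its KL divergence equals that of Q'. So the two infima differ by that constant. *)

section \<open>Data processing inequality for the KL divergence\<close>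

lemma density_enn2real_RN_deriv:
  assumes R: "sigma_finite_measure R" and P: "prob_space P"
    and ac: "absolutely_continuous R P" and sets: "sets P = sets R"
  shows "density R (\<lambda>x. ennreal (enn2real (RN_deriv R P x))) = P"
proof -
  interpret R: sigma_finite_measure R by fact
  have "AE x in R. RN_deriv R P x \<noteq> \<infinity>"
    using R.RN_deriv_finite[OF prob_space_imp_sigma_finite[OF P] ac sets] .
  then have "density R (\<lambda>x. ennreal (enn2real (RN_deriv R P x))) = density R (RN_deriv R P)"
    by (intro density_cong) (auto elim!: eventually_mono simp: less_top)
  also have "\<dots> = P"
    using R.density_RN_deriv[OF ac sets] .
  finally show ?thesis .
qed

lemma nn_integral_density_divide_le:
  fixes G b :: "'a \<Rightarrow> real"
  assumes [measurable]: "G \<in> borel_measurable R" "b \<in> borel_measurable R" and b: "\<And>x. 0 \<le> b x"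
  shows "(\<integral>\<^sup>+x. ennreal (b x / G x) \<partial>density R (\<lambda>x. ennreal (G x))) \<le> (\<integral>\<^sup>+x. ennreal (b x) \<partial>R)"
proof -
  have "(\<integral>\<^sup>+x. ennreal (b x / G x) \<partial>density R (\<lambda>x. ennreal (G x)))
      = (\<integral>\<^sup>+x. ennreal (G x) * ennreal (b x / G x) \<partial>R)"
    by (rule nn_integral_density) measurable
  also have "\<dots> \<le> (\<integral>\<^sup>+x. ennreal (b x) \<partial>R)"
  proof (rule nn_integral_mono)
    fix x
    show "ennreal (G x) * ennreal (b x / G x) \<le> ennreal (b x)"
      using b[of x] by (cases "0 < G x") (auto simp: ennreal_mult[symmetric] ennreal_neg)
  qed
  finally show ?thesis .
qed

lemma integrable_density_divide:
  fixes G b :: "'a \<Rightarrow> real"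
  assumes [measurable]: "G \<in> borel_measurable R" "b \<in> borel_measurable R"
    and b: "\<And>x. 0 \<le> b x" and K: "0 \<le> K" "(\<integral>\<^sup>+x. ennreal (b x) \<partial>R) \<le> ennreal K"
  shows "integrable (density R (\<lambda>x. ennreal (G x))) (\<lambda>x. b x / G x)"
    and "(\<integral>x. b x / G x \<partial>density R (\<lambda>x. ennreal (G x))) \<le> K"
proof -
  have "(\<integral>\<^sup>+x. ennreal (b x / G x) \<partial>density R (\<lambda>x. ennreal (G x))) \<le> (\<integral>\<^sup>+x. ennreal (b x) \<partial>R)"
    by (rule nn_integral_density_divide_le) (simp_all add: b)
  then have nn: "(\<integral>\<^sup>+x. ennreal (b x / G x) \<partial>density R (\<lambda>x. ennreal (G x))) \<le> ennreal K"
    using K(2) by (rule order_trans)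
  show "integrable (density R (\<lambda>x. ennreal (G x))) (\<lambda>x. b x / G x)"
  proof (rule integrableI_nonneg)
    show "AE x in density R (\<lambda>x. ennreal (G x)). 0 \<le> b x / G x"
      using b by (subst AE_density) auto
    show "(\<integral>\<^sup>+x. ennreal (b x / G x) \<partial>density R (\<lambda>x. ennreal (G x))) < \<infinity>"
      using nn by (simp add: le_less_trans)
  qed simp
  show "(\<integral>x. b x / G x \<partial>density R (\<lambda>x. ennreal (G x))) \<le> K"
    using K(1) nn by (rule integral_real_bounded)
qed

lemma Gibbs_inequality_density:
  fixes G b :: "'a \<Rightarrow> real"
  assumes P: "prob_space P" "density R (\<lambda>x. ennreal (G x)) = P"
    and [measurable]: "G \<in> borel_measurable R" "b \<in> borel_measurable R"
    and ln_G: "integrable P (\<lambda>x. ln (G x))"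
    and b: "0 < \<delta>" "\<And>x. \<delta> \<le> b x" and K: "0 \<le> K" "(\<integral>\<^sup>+x. ennreal (b x) \<partial>R) \<le> ennreal K"
  shows "integrable P (\<lambda>x. ln (b x))" and "(\<integral>x. ln (b x) \<partial>P) \<le> (\<integral>x. ln (G x) \<partial>P) + K - 1"
proof -
  interpret P: prob_space P by fact
  have [measurable]: "G \<in> borel_measurable P" "b \<in> borel_measurable P"
    by (simp_all flip: P(2))
  have G_pos: "AE x in P. 0 < G x"
    unfolding P(2)[symmetric] by (subst AE_density) auto
  have b_nonneg: "0 \<le> b x" for x
    using b by (meson less_le_trans less_imp_le)
  have ratio: "integrable P (\<lambda>x. b x / G x)" and ratio_le: "(\<integral>x. b x / G x \<partial>P) \<le> K"
    using integrable_density_divide[of G R b K] b_nonneg K unfolding P(2) by simp_all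
  have pointwise: "AE x in P. ln (b x) \<le> ln (G x) + b x / G x - 1"
    using G_pos
  proof eventually_elim
    case (elim x)
    have "0 < b x" using b by (rule less_le_trans)
    then have "ln (b x / G x) \<le> b x / G x - 1"
      using elim by (intro ln_le_minus_one) simp
    then show ?case using \<open>0 < b x\<close> elim by (simp add: ln_div)
  qed
  show ln_b: "integrable P (\<lambda>x. ln (b x))"
  proof (rule Bochner_Integration.integrable_bound)
    show "integrable P (\<lambda>x. \<bar>ln \<delta>\<bar> + \<bar>ln (G x)\<bar> + b x / G x)"
      using ratio ln_G by (intro Bochner_Integration.integrable_add integrable_abs) auto
    show "AE x in P. norm (ln (b x)) \<le> norm (\<bar>ln \<delta>\<bar> + \<bar>ln (G x)\<bar> + b x / G x)"
      using pointwise G_pos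
    proof eventually_elim
      case (elim x)
      have "ln \<delta> \<le> ln (b x)" and "0 \<le> b x / G x"
        using b(2)[of x] b(1) elim b_nonneg[of x] by auto
      then have "\<bar>ln (b x)\<bar> \<le> \<bar>ln \<delta>\<bar> + \<bar>ln (G x)\<bar> + b x / G x"
        using elim by linarith
      then show ?case by simp
    qed
  qed simp
  have "(\<integral>x. ln (b x) \<partial>P) \<le> (\<integral>x. ln (G x) + b x / G x - 1 \<partial>P)"
    using pointwise ratio ln_b ln_G by (intro integral_mono_AE) auto
  also have "\<dots> = (\<integral>x. ln (G x) \<partial>P) + (\<integral>x. b x / G x \<partial>P) - 1"
    using ratio ln_G P.prob_space by simp
  finally show "(\<integral>x. ln (b x) \<partial>P) \<le> (\<integral>x. ln (G x) \<partial>P) + K - 1"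
    using ratio_le by linarith
qed

lemma absolutely_continuous_distr:
  assumes "absolutely_continuous R P" and sets_P: "sets P = sets R" and \<Phi>: "\<Phi> \<in> measurable R N"
  shows "absolutely_continuous (distr R N \<Phi>) (distr P N \<Phi>)"
  unfolding absolutely_continuous_def
proof
  have \<Phi>_P: "\<Phi> \<in> measurable P N"
    unfolding measurable_cong_sets[OF sets_P refl] by (rule \<Phi>)
  fix A assume "A \<in> null_sets (distr R N \<Phi>)"
  then have "\<Phi> -` A \<inter> space R \<in> null_sets R" "A \<in> sets N"
    using \<Phi> by (auto simp: null_sets_distr_iff)
  then have "\<Phi> -` A \<inter> space P \<in> null_sets P"
    using assms(1) sets_eq_imp_space_eq[OF sets_P] by (auto simp: absolutely_continuous_def)
  then show "A \<in> null_sets (distr P N \<Phi>)"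
    using \<open>A \<in> sets N\<close> \<Phi>_P by (simp add: null_sets_distr_iff)
qed

context
  fixes R P :: "'a measure" and N :: "'b measure" and \<Phi> :: "'a \<Rightarrow> 'b"
    and G :: "'a \<Rightarrow> real" and G' :: "'b \<Rightarrow> real"
  assumes R: "prob_space R" and P: "prob_space P" "density R (\<lambda>x. ennreal (G x)) = P"
    and P': "density (distr R N \<Phi>) (\<lambda>y. ennreal (G' y)) = distr P N \<Phi>"
    and \<Phi>[measurable]: "\<Phi> \<in> measurable R N"
    and G[measurable]: "G \<in> borel_measurable R" and G'[measurable]: "G' \<in> borel_measurable N"
    and ln_G: "integrable P (\<lambda>x. ln (G x))"
begin

(* ln G' is not known to be integrable in advance: truncating it below at \<delta> lets Gibbs'
   inequality compare G with the test function max (G' o \<Phi>) \<delta>, whose R-mass is at most 1 + \<delta>. *)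
lemma integral_ln_max_density_distr_le:
  assumes "0 < \<delta>"
  shows "integrable (distr P N \<Phi>) (\<lambda>y. ln (max (G' y) \<delta>))"
    and "(\<integral>y. ln (max (G' y) \<delta>) \<partial>distr P N \<Phi>) \<le> (\<integral>x. ln (G x) \<partial>P) + \<delta>"
proof -
  interpret R: prob_space R by fact
  interpret P: prob_space P by fact
  have "sets P = sets R"
    by (simp flip: P(2))
  then have [measurable]: "\<Phi> \<in> measurable P N"
    unfolding measurable_cong_sets[of P R N N] by simp
  have mass: "(\<integral>\<^sup>+x. ennreal (G' (\<Phi> x)) \<partial>R) = 1"
  proof -
    have "(\<integral>\<^sup>+x. ennreal (G' (\<Phi> x)) \<partial>R) = (\<integral>\<^sup>+y. ennreal (G' y) * 1 \<partial>distr R N \<Phi>)"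
      by (simp add: nn_integral_distr)
    also have "\<dots> = (\<integral>\<^sup>+y. 1 \<partial>distr P N \<Phi>)"
      unfolding P'[symmetric] by (rule nn_integral_density[symmetric]) simp_all
    also have "\<dots> = 1"
      using prob_space.emeasure_space_1[OF P.prob_space_distr[of \<Phi> N]] by simp
    finally show ?thesis .
  qed
  have "ennreal (max a \<delta>) \<le> ennreal a + ennreal \<delta>" for a
  proof (cases "0 \<le> a")
    case True
    then show ?thesis
      using \<open>0 < \<delta>\<close> by (simp add: ennreal_leI flip: ennreal_plus)
  qed (simp add: max_def)
  then have "(\<integral>\<^sup>+x. ennreal (max (G' (\<Phi> x)) \<delta>) \<partial>R)
      \<le> (\<integral>\<^sup>+x. ennreal (G' (\<Phi> x)) + ennreal \<delta> \<partial>R)"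
    by (intro nn_integral_mono)
  also have "\<dots> = ennreal (1 + \<delta>)"
    using mass \<open>0 < \<delta>\<close> by (simp add: nn_integral_add R.emeasure_space_1 ennreal_plus)
  finally have "(\<integral>\<^sup>+x. ennreal (max (G' (\<Phi> x)) \<delta>) \<partial>R) \<le> ennreal (1 + \<delta>)" .
  from Gibbs_inequality_density[OF P _ _ ln_G \<open>0 < \<delta>\<close> _ _ this]
  have "integrable P (\<lambda>x. ln (max (G' (\<Phi> x)) \<delta>))"
    and "(\<integral>x. ln (max (G' (\<Phi> x)) \<delta>) \<partial>P) \<le> (\<integral>x. ln (G x) \<partial>P) + \<delta>"
    using \<open>0 < \<delta>\<close> by auto
  then show "integrable (distr P N \<Phi>) (\<lambda>y. ln (max (G' y) \<delta>))"
    and "(\<integral>y. ln (max (G' y) \<delta>) \<partial>distr P N \<Phi>) \<le> (\<integral>x. ln (G x) \<partial>P) + \<delta>"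
    by (simp_all add: integrable_distr_eq integral_distr)
qed

lemma integrable_ln_density_distr: "integrable (distr P N \<Phi>) (\<lambda>y. ln (G' y))"
proof (rule Bochner_Integration.integrable_bound)
  interpret R: prob_space R by fact
  have "(\<integral>\<^sup>+y. ennreal 1 \<partial>distr R N \<Phi>) \<le> ennreal 1"
    using prob_space.emeasure_space_1[OF R.prob_space_distr[OF \<Phi>]] by simp
  then have "integrable (distr P N \<Phi>) (\<lambda>y. 1 / G' y)"
    using integrable_density_divide(1)[of G' "distr R N \<Phi>" "\<lambda>_. 1" 1] by (simp add: P')
  then show "integrable (distr P N \<Phi>) (\<lambda>y. \<bar>ln (max (G' y) 1)\<bar> + 1 / G' y)"
    using integral_ln_max_density_distr_le(1)[of 1]
    by (intro Bochner_Integration.integrable_add integrable_abs) auto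
  have "AE y in distr P N \<Phi>. 0 < G' y"
    unfolding P'[symmetric] by (subst AE_density) auto
  then show "AE y in distr P N \<Phi>. norm (ln (G' y)) \<le> norm (\<bar>ln (max (G' y) 1)\<bar> + 1 / G' y)"
  proof eventually_elim
    case (elim y)
    have "ln (1 / G' y) \<le> 1 / G' y - 1"
      using elim by (intro ln_le_minus_one) simp
    then show ?case
      using elim by (cases "1 \<le> G' y") (auto simp: ln_div)
  qed
qed simp

lemma integral_ln_density_distr_le:
  "(\<integral>y. ln (G' y) \<partial>distr P N \<Phi>) \<le> (\<integral>x. ln (G x) \<partial>P)"
proof (rule field_le_epsilon)
  fix \<delta> :: real assume "0 < \<delta>"
  have "AE y in distr P N \<Phi>. 0 < G' y"
    unfolding P'[symmetric] by (subst AE_density) auto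
  then have "(\<integral>y. ln (G' y) \<partial>distr P N \<Phi>) \<le> (\<integral>y. ln (max (G' y) \<delta>) \<partial>distr P N \<Phi>)"
    using integrable_ln_density_distr
      integral_ln_max_density_distr_le(1)[OF \<open>0 < \<delta>\<close>]
    by (intro integral_mono_AE) auto
  then show "(\<integral>y. ln (G' y) \<partial>distr P N \<Phi>) \<le> (\<integral>x. ln (G x) \<partial>P) + \<delta>"
    using integral_ln_max_density_distr_le(2)[OF \<open>0 < \<delta>\<close>] by linarith
qed

end

theorem KL_div_distr_le:
  assumes R: "prob_space R" and P: "prob_space P" and sets_P: "sets P = sets R"
    and [measurable]: "\<Phi> \<in> measurable R N"
  shows "KL_div (distr P N \<Phi>) (distr R N \<Phi>) \<le> KL_div P R"
proof -
  interpret R: prob_space R by fact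
  have [measurable]: "\<Phi> \<in> measurable P N"
    unfolding measurable_cong_sets[OF sets_P refl] by simp
  define R' P' where "R' = distr R N \<Phi>" and "P' = distr P N \<Phi>"
  define G G' where "G = (\<lambda>x. enn2real (RN_deriv R P x))"
    and "G' = (\<lambda>y. enn2real (RN_deriv R' P' y))"
  have [measurable]: "G \<in> borel_measurable R"
    by (simp add: G_def)
  have "G' \<in> borel_measurable R'"
    by (simp add: G'_def)
  then have [measurable]: "G' \<in> borel_measurable N"
    by (simp add: R'_def measurable_cong_sets[of R' N])
  show ?thesis
  proof (cases "absolutely_continuous R P \<and> integrable P (\<lambda>x. ln (G x))")
    case False
    then show ?thesis by (auto simp: KL_div_def G_def)
  next
    case True
    then have ac: "absolutely_continuous R P" and ln_G: "integrable P (\<lambda>x. ln (G x))"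
      by auto
    have ac': "absolutely_continuous R' P'"
      unfolding R'_def P'_def using ac sets_P by (rule absolutely_continuous_distr) simp
    have prob_P': "prob_space P'" and sigma_R': "sigma_finite_measure R'"
      unfolding P'_def R'_def
      by (auto intro!: prob_space.prob_space_distr P prob_space_imp_sigma_finite R.prob_space_distr)
    have dens: "density R (\<lambda>x. ennreal (G x)) = P"
      unfolding G_def using R.sigma_finite_measure_axioms P ac sets_P
      by (rule density_enn2real_RN_deriv)
    have dens': "density R' (\<lambda>y. ennreal (G' y)) = P'"
      unfolding G'_def using sigma_R' prob_P' ac'
      by (rule density_enn2real_RN_deriv) (simp add: R'_def P'_def)
    have "integrable P' (\<lambda>y. ln (G' y))"
      unfolding P'_def using integrable_ln_density_distr[OF R P dens dens'[unfolded R'_def P'_def]] ln_G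
      by simp
    moreover have "(\<integral>y. ln (G' y) \<partial>P') \<le> (\<integral>x. ln (G x) \<partial>P)"
      unfolding P'_def using integral_ln_density_distr_le[OF R P dens dens'[unfolded R'_def P'_def]] ln_G
      by simp
    ultimately have "KL_div P' R' \<le> KL_div P R"
      using ac ac' ln_G by (simp add: KL_div_def G_def G'_def)
    then show ?thesis
      by (simp add: R'_def P'_def)
  qed
qed

section \<open>Entropic transport along maps invertible on the first marginal\<close>

lemma measurable_coupling:
  "Q \<in> couplings \<mu> \<nu> \<Longrightarrow> measurable Q N = measurable (\<mu> \<Otimes>\<^sub>M \<nu>) N"
  by (intro measurable_cong_sets) (simp_all add: couplings_def)

lemma distr_couplings:
  assumes Q: "Q \<in> couplings \<mu> \<nu>" and [measurable]: "f \<in> measurable \<mu> A" "g \<in> measurable \<nu> B"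
  shows "distr Q (distr \<mu> A f \<Otimes>\<^sub>M distr \<nu> B g) (\<lambda>z. (f (fst z), g (snd z)))
    \<in> couplings (distr \<mu> A f) (distr \<nu> B g)"
proof -
  let ?\<Phi> = "\<lambda>z. (f (fst z), g (snd z))"
  have sets: "sets (distr \<mu> A f \<Otimes>\<^sub>M distr \<nu> B g) = sets (A \<Otimes>\<^sub>M B)"
    by (rule sets_pair_measure_cong) simp_all
  have [measurable]: "?\<Phi> \<in> measurable Q (distr \<mu> A f \<Otimes>\<^sub>M distr \<nu> B g)"
    unfolding measurable_coupling[OF Q] measurable_cong_sets[OF refl sets] by simp
  have [measurable]: "fst \<in> measurable Q \<mu>" "snd \<in> measurable Q \<nu>"
    unfolding measurable_coupling[OF Q] by simp_all
  have marginals: "distr Q \<mu> fst = \<mu>" "distr Q \<nu> snd = \<nu>" and "prob_space Q"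
    using Q by (simp_all add: couplings_def)
  have "distr (distr Q (distr \<mu> A f \<Otimes>\<^sub>M distr \<nu> B g) ?\<Phi>) (distr \<mu> A f) fst
      = distr (distr Q \<mu> fst) (distr \<mu> A f) f"
    by (simp add: distr_distr comp_def)
  moreover have "distr (distr Q (distr \<mu> A f \<Otimes>\<^sub>M distr \<nu> B g) ?\<Phi>) (distr \<nu> B g) snd
      = distr (distr Q \<nu> snd) (distr \<nu> B g) g"
    by (simp add: distr_distr comp_def)
  moreover have "distr \<mu> (distr \<mu> A f) f = distr \<mu> A f" "distr \<nu> (distr \<nu> B g) g = distr \<nu> B g"
    by (simp_all cong: distr_cong)
  moreover have "prob_space (distr Q (distr \<mu> A f \<Otimes>\<^sub>M distr \<nu> B g) ?\<Phi>)"
    using \<open>prob_space Q\<close> by (simp add: prob_space.prob_space_distr)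
  ultimately show ?thesis
    unfolding couplings_def marginals by simp
qed

lemma (in pair_sigma_finite) distr_snd_density:
  assumes [measurable]: "f \<in> borel_measurable (M1 \<Otimes>\<^sub>M M2)"
  shows "distr (density (M1 \<Otimes>\<^sub>M M2) f) M2 snd = density M2 (\<lambda>y. \<integral>\<^sup>+x. f (x, y) \<partial>M1)"
proof (rule measure_eqI)
  fix S assume "S \<in> sets (distr (density (M1 \<Otimes>\<^sub>M M2) f) M2 snd)"
  then have [measurable]: "S \<in> sets M2"
    by simp
  have "emeasure (distr (density (M1 \<Otimes>\<^sub>M M2) f) M2 snd) S
      = (\<integral>\<^sup>+z. f z * indicator S (snd z) \<partial>(M1 \<Otimes>\<^sub>M M2))"
    by (auto simp: emeasure_distr emeasure_density space_pair_measure
        split: split_indicator intro!: nn_integral_cong)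
  also have "\<dots> = (\<integral>\<^sup>+y. (\<integral>\<^sup>+x. f (x, y) * indicator S y \<partial>M1) \<partial>M2)"
    using nn_integral_snd[of "\<lambda>z. f z * indicator S (snd z)"] by simp
  also have "\<dots> = (\<integral>\<^sup>+y. (\<integral>\<^sup>+x. f (x, y) \<partial>M1) * indicator S y \<partial>M2)"
    by (intro nn_integral_cong nn_integral_multc) measurable
  also have "\<dots> = emeasure (density M2 (\<lambda>y. \<integral>\<^sup>+x. f (x, y) \<partial>M1)) S"
    by (simp add: emeasure_density)
  finally show "emeasure (distr (density (M1 \<Otimes>\<^sub>M M2) f) M2 snd) S
      = emeasure (density M2 (\<lambda>y. \<integral>\<^sup>+x. f (x, y) \<partial>M1)) S" .
qed simp

lemma cost_integral_AE_eq_add: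
  assumes eq: "AE z in Q. c (fst z) (snd z) = f z + g z"
    and [measurable]: "(\<lambda>z. c (fst z) (snd z)) \<in> borel_measurable Q" "f \<in> borel_measurable Q"
    and g: "integrable Q g"
  shows "cost_integral Q c
    = (if integrable Q f then ereal (\<integral>z. f z \<partial>Q) else \<infinity>) + ereal (\<integral>z. g z \<partial>Q)"
proof -
  have [measurable]: "g \<in> borel_measurable Q"
    using g by (rule borel_measurable_integrable)
  have "integrable Q (\<lambda>z. c (fst z) (snd z)) \<longleftrightarrow> integrable Q (\<lambda>z. f z + g z)"
    using eq by (intro integrable_cong_AE) auto
  also have "\<dots> \<longleftrightarrow> integrable Q f"
    using Bochner_Integration.integrable_diff[of Q "\<lambda>z. f z + g z" g] g by auto
  finally have integrable_iff: "integrable Q (\<lambda>z. c (fst z) (snd z)) \<longleftrightarrow> integrable Q f" .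
  show ?thesis
  proof (cases "integrable Q f")
    case True
    have "(\<integral>z. c (fst z) (snd z) \<partial>Q) = (\<integral>z. f z + g z \<partial>Q)"
      using eq by (intro integral_cong_AE) auto
    then show ?thesis
      using True g integrable_iff by (simp add: cost_integral_def)
  qed (simp add: cost_integral_def integrable_iff)
qed

locale OT_pushforward =
  fixes \<mu> :: "'a measure" and \<nu> :: "'b measure" and A :: "'c measure" and B :: "'e measure"
    and T\<^sub>1 :: "'a \<Rightarrow> 'c" and T\<^sub>2 :: "'b \<Rightarrow> 'e" and h :: "'c \<Rightarrow> 'a"
  assumes prob_\<mu>: "prob_space \<mu>" and prob_\<nu>: "prob_space \<nu>"
    and T\<^sub>1[measurable]: "T\<^sub>1 \<in> measurable \<mu> A" and T\<^sub>2[measurable]: "T\<^sub>2 \<in> measurable \<nu> B"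
    and h[measurable]: "h \<in> measurable A \<mu>"
    and h_T\<^sub>1: "AE x in \<mu>. h (T\<^sub>1 x) = x"
begin

abbreviation "\<mu>' \<equiv> distr \<mu> A T\<^sub>1"
abbreviation "\<nu>' \<equiv> distr \<nu> B T\<^sub>2"
abbreviation "\<Phi> \<equiv> \<lambda>z. (T\<^sub>1 (fst z), T\<^sub>2 (snd z))"

sublocale \<rho>: pair_prob_space \<mu> \<nu>
  using prob_\<mu> prob_\<nu> by (simp add: pair_prob_space_def pair_sigma_finite_def prob_space_imp_sigma_finite)

sublocale \<rho>': pair_prob_space \<mu>' \<nu>'
  using prob_\<mu> prob_\<nu>
  by (simp add: pair_prob_space_def pair_sigma_finite_def prob_space_imp_sigma_finite
      prob_space.prob_space_distr)

lemma sets_pushforward_product: "sets (\<mu>' \<Otimes>\<^sub>M \<nu>') = sets (A \<Otimes>\<^sub>M B)"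
  by (rule sets_pair_measure_cong) simp_all

lemma measurable_\<Phi>: "\<Phi> \<in> measurable (\<mu> \<Otimes>\<^sub>M \<nu>) (\<mu>' \<Otimes>\<^sub>M \<nu>')"
  unfolding measurable_cong_sets[OF refl sets_pushforward_product] by simp

lemma distr_\<Phi>_product: "distr (\<mu> \<Otimes>\<^sub>M \<nu>) (\<mu>' \<Otimes>\<^sub>M \<nu>') \<Phi> = \<mu>' \<Otimes>\<^sub>M \<nu>'"
proof -
  have "\<mu>' \<Otimes>\<^sub>M \<nu>' = distr (\<mu> \<Otimes>\<^sub>M \<nu>) (A \<Otimes>\<^sub>M B) (\<lambda>(x, y). (T\<^sub>1 x, T\<^sub>2 y))"
    by (rule pair_measure_distr) (simp_all add: \<rho>'.M2.sigma_finite_measure_axioms)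
  also have "\<dots> = distr (\<mu> \<Otimes>\<^sub>M \<nu>) (\<mu>' \<Otimes>\<^sub>M \<nu>') \<Phi>"
    by (rule distr_cong) (simp_all add: sets_pushforward_product split_beta)
  finally show ?thesis ..
qed

lemma KL_div_distr_coupling_le:
  assumes "Q \<in> couplings \<mu> \<nu>"
  shows "KL_div (distr Q (\<mu>' \<Otimes>\<^sub>M \<nu>') \<Phi>) (\<mu>' \<Otimes>\<^sub>M \<nu>') \<le> KL_div Q (\<mu> \<Otimes>\<^sub>M \<nu>)"
  using KL_div_distr_le[OF \<rho>.prob_space_axioms _ _ measurable_\<Phi>, of Q] assms
  by (simp add: couplings_def distr_\<Phi>_product)

definition lift :: "('c \<times> 'e) measure \<Rightarrow> ('a \<times> 'b) measure" where
  "lift Q' = density (\<mu> \<Otimes>\<^sub>M \<nu>) (\<lambda>z. RN_deriv (\<mu>' \<Otimes>\<^sub>M \<nu>') Q' (\<Phi> z))"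

lemma sets_lift[simp]: "sets (lift Q') = sets (\<mu> \<Otimes>\<^sub>M \<nu>)"
  by (simp add: lift_def)

lemma measurable_RN_deriv_\<Phi>:
  "(\<lambda>z. RN_deriv (\<mu>' \<Otimes>\<^sub>M \<nu>') Q' (\<Phi> z)) \<in> borel_measurable (\<mu> \<Otimes>\<^sub>M \<nu>)"
  using measurable_compose[OF measurable_\<Phi> borel_measurable_RN_deriv] by simp

lemma distr_lift:
  assumes Q': "Q' \<in> couplings \<mu>' \<nu>'" and ac: "absolutely_continuous (\<mu>' \<Otimes>\<^sub>M \<nu>') Q'"
  shows "distr (lift Q') (\<mu>' \<Otimes>\<^sub>M \<nu>') \<Phi> = Q'"
proof -
  have "distr (lift Q') (\<mu>' \<Otimes>\<^sub>M \<nu>') \<Phi>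
      = density (distr (\<mu> \<Otimes>\<^sub>M \<nu>) (\<mu>' \<Otimes>\<^sub>M \<nu>') \<Phi>) (RN_deriv (\<mu>' \<Otimes>\<^sub>M \<nu>') Q')"
    unfolding lift_def by (rule density_distr[symmetric]) (simp_all add: measurable_\<Phi>)
  also have "\<dots> = Q'"
    using \<rho>'.density_RN_deriv[OF ac] Q' by (simp add: distr_\<Phi>_product couplings_def)
  finally show ?thesis .
qed

lemma KL_div_lift:
  assumes Q': "Q' \<in> couplings \<mu>' \<nu>'" and ac: "absolutely_continuous (\<mu>' \<Otimes>\<^sub>M \<nu>') Q'"
  shows "KL_div (lift Q') (\<mu> \<Otimes>\<^sub>M \<nu>) = KL_div Q' (\<mu>' \<Otimes>\<^sub>M \<nu>')"
proof -
  let ?g = "RN_deriv (\<mu>' \<Otimes>\<^sub>M \<nu>') Q'"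
  have \<Phi>_lift: "\<Phi> \<in> measurable (lift Q') (\<mu>' \<Otimes>\<^sub>M \<nu>')"
    using measurable_\<Phi> by (simp add: measurable_cong_sets[OF sets_lift refl])
  have ln_g: "(\<lambda>y. ln (enn2real (?g y))) \<in> borel_measurable (\<mu>' \<Otimes>\<^sub>M \<nu>')"
    by simp
  have ac_lift: "absolutely_continuous (\<mu> \<Otimes>\<^sub>M \<nu>) (lift Q')"
    unfolding lift_def by (rule absolutely_continuousI_density[OF measurable_RN_deriv_\<Phi>])
  have "AE z in \<mu> \<Otimes>\<^sub>M \<nu>. ?g (\<Phi> z) = RN_deriv (\<mu> \<Otimes>\<^sub>M \<nu>) (lift Q') z"
    by (rule \<rho>.RN_deriv_unique[OF measurable_RN_deriv_\<Phi>]) (simp add: lift_def)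
  from absolutely_continuous_AE[OF _ ac_lift this]
  have RN: "AE z in lift Q'. ln (enn2real (RN_deriv (\<mu> \<Otimes>\<^sub>M \<nu>) (lift Q') z))
      = ln (enn2real (?g (\<Phi> z)))"
    by (auto elim: eventually_mono)
  have m1: "(\<lambda>z. ln (enn2real (RN_deriv (\<mu> \<Otimes>\<^sub>M \<nu>) (lift Q') z))) \<in> borel_measurable (lift Q')"
    by (simp add: measurable_cong_sets[OF sets_lift refl])
  have m2: "(\<lambda>z. ln (enn2real (?g (\<Phi> z)))) \<in> borel_measurable (lift Q')"
    using measurable_compose[OF \<Phi>_lift ln_g] by simp
  have "integrable (lift Q') (\<lambda>z. ln (enn2real (RN_deriv (\<mu> \<Otimes>\<^sub>M \<nu>) (lift Q') z)))
      \<longleftrightarrow> integrable Q' (\<lambda>y. ln (enn2real (?g y)))"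
    using integrable_cong_AE[OF m1 m2 RN] integrable_distr_eq[OF \<Phi>_lift ln_g]
    by (simp add: distr_lift[OF Q' ac])
  moreover have "(\<integral>z. ln (enn2real (RN_deriv (\<mu> \<Otimes>\<^sub>M \<nu>) (lift Q') z)) \<partial>lift Q')
      = (\<integral>y. ln (enn2real (?g y)) \<partial>Q')"
    using integral_cong_AE[OF m1 m2 RN] integral_distr[OF \<Phi>_lift ln_g]
    by (simp add: distr_lift[OF Q' ac])
  ultimately show ?thesis
    using ac ac_lift by (simp add: KL_div_def)
qed

lemma distr_fst_lift:
  assumes Q': "Q' \<in> couplings \<mu>' \<nu>'" and ac: "absolutely_continuous (\<mu>' \<Otimes>\<^sub>M \<nu>') Q'"
  shows "distr (lift Q') \<mu> fst = \<mu>"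
proof -
  have [measurable]: "fst \<in> measurable (lift Q') \<mu>"
    by (simp add: measurable_cong_sets[OF sets_lift refl])
  have \<Phi>_lift: "\<Phi> \<in> measurable (lift Q') (\<mu>' \<Otimes>\<^sub>M \<nu>')"
    using measurable_\<Phi> by (simp add: measurable_cong_sets[OF sets_lift refl])
  have [measurable]: "fst \<in> measurable Q' \<mu>'" "fst \<in> measurable Q' A"
    using measurable_fst[of \<mu>' \<nu>'] unfolding measurable_coupling[OF Q'] by simp_all
  have [measurable]: "h \<in> measurable \<mu>' \<mu>"
    by simp
  have "AE x in distr (\<mu> \<Otimes>\<^sub>M \<nu>) \<mu> fst. h (T\<^sub>1 x) = x"
    unfolding prob_space.distr_pair_fst[OF prob_\<nu>] by (rule h_T\<^sub>1)
  then have "AE z in \<mu> \<Otimes>\<^sub>M \<nu>. h (T\<^sub>1 (fst z)) = fst z"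
    by (rule AE_distrD[rotated]) simp
  then have "AE z in lift Q'. fst z = h (T\<^sub>1 (fst z))"
    unfolding lift_def by (subst AE_density[OF measurable_RN_deriv_\<Phi>]) (auto elim: eventually_mono)
  then have "distr (lift Q') \<mu> fst = distr (lift Q') \<mu> (\<lambda>z. h (fst (\<Phi> z)))"
    using measurable_compose[OF \<Phi>_lift, of "\<lambda>y. h (fst y)" \<mu>]
    by (intro distr_cong_AE) (simp_all add: measurable_cong_sets[OF sets_pushforward_product refl])
  also have "\<dots> = distr (distr (lift Q') (\<mu>' \<Otimes>\<^sub>M \<nu>') \<Phi>) \<mu> (\<lambda>y. h (fst y))"
    using \<Phi>_lift by (subst distr_distr) (simp_all add: comp_def measurable_cong_sets[OF sets_pushforward_product refl])
  also have "\<dots> = distr (distr Q' \<mu>' fst) \<mu> h"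
    unfolding distr_lift[OF Q' ac] by (subst distr_distr) (simp_all add: comp_def)
  also have "\<dots> = distr \<mu> \<mu> (\<lambda>x. h (T\<^sub>1 x))"
    using Q' by (simp add: couplings_def distr_distr comp_def)
  also have "\<dots> = distr \<mu> \<mu> (\<lambda>x. x)"
    using h_T\<^sub>1 by (intro distr_cong_AE) simp_all
  finally show ?thesis
    by (simp add: distr_id)
qed

lemma distr_snd_lift:
  assumes Q': "Q' \<in> couplings \<mu>' \<nu>'" and ac: "absolutely_continuous (\<mu>' \<Otimes>\<^sub>M \<nu>') Q'"
  shows "distr (lift Q') \<nu> snd = \<nu>"
proof -
  let ?g = "RN_deriv (\<mu>' \<Otimes>\<^sub>M \<nu>') Q'"
  define H where "H = (\<lambda>z. \<integral>\<^sup>+x. ?g (x, z) \<partial>\<mu>')"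
  have [measurable]: "?g \<in> borel_measurable (A \<Otimes>\<^sub>M B)"
    using borel_measurable_RN_deriv[of "\<mu>' \<Otimes>\<^sub>M \<nu>'" Q']
    unfolding measurable_cong_sets[OF sets_pushforward_product refl] .
  have "(\<lambda>(z, x). ?g (x, z)) \<in> borel_measurable (\<nu>' \<Otimes>\<^sub>M \<mu>')"
    using measurable_pair_swap[OF borel_measurable_RN_deriv[of "\<mu>' \<Otimes>\<^sub>M \<nu>'" Q']]
    by (simp add: split_beta)
  then have H_meas: "H \<in> borel_measurable \<nu>'"
    unfolding H_def by (rule \<rho>'.M1.borel_measurable_nn_integral)
  have "density \<nu>' H = distr Q' \<nu>' snd"
    using \<rho>'.distr_snd_density[of ?g] \<rho>'.density_RN_deriv[OF ac] Q'
    by (simp add: H_def couplings_def)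
  also have "\<dots> = density \<nu>' (\<lambda>_. 1)"
    using Q' by (simp add: couplings_def density_1)
  finally have "AE z in \<nu>'. H z = 1"
    using \<rho>'.M2.density_unique_iff[OF H_meas] by simp
  then have H_T\<^sub>2: "AE y in \<nu>. H (T\<^sub>2 y) = 1"
    by (rule AE_distrD[rotated]) simp
  have "AE y in \<nu>. (\<integral>\<^sup>+x. ?g (\<Phi> (x, y)) \<partial>\<mu>) = 1"
    using H_T\<^sub>2 AE_space
  proof eventually_elim
    case (elim y)
    then have "T\<^sub>2 y \<in> space B"
      using measurable_space[OF T\<^sub>2] by simp
    then have "(\<integral>\<^sup>+x. ?g (\<Phi> (x, y)) \<partial>\<mu>) = H (T\<^sub>2 y)"
      unfolding H_def by (subst nn_integral_distr) simp_all
    with elim show ?case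
      by simp
  qed
  then have "density \<nu> (\<lambda>y. \<integral>\<^sup>+x. ?g (\<Phi> (x, y)) \<partial>\<mu>) = density \<nu> (\<lambda>_. 1)"
    by (intro density_cong) measurable
  moreover have "distr (lift Q') \<nu> snd = density \<nu> (\<lambda>y. \<integral>\<^sup>+x. ?g (\<Phi> (x, y)) \<partial>\<mu>)"
    unfolding lift_def using measurable_RN_deriv_\<Phi> by (rule \<rho>.distr_snd_density)
  ultimately show ?thesis
    by (simp add: density_1)
qed

lemma lift_couplings:
  assumes Q': "Q' \<in> couplings \<mu>' \<nu>'" and ac: "absolutely_continuous (\<mu>' \<Otimes>\<^sub>M \<nu>') Q'"
  shows "lift Q' \<in> couplings \<mu> \<nu>"
proof -
  have "\<Phi> \<in> measurable (lift Q') (\<mu>' \<Otimes>\<^sub>M \<nu>')"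
    using measurable_\<Phi> by (simp add: measurable_cong_sets[OF sets_lift refl])
  moreover have "prob_space (distr (lift Q') (\<mu>' \<Otimes>\<^sub>M \<nu>') \<Phi>)"
    using Q' by (simp add: distr_lift[OF Q' ac] couplings_def)
  ultimately have "prob_space (lift Q')"
    by (rule prob_space_distrD)
  then show ?thesis
    using distr_fst_lift[OF Q' ac] distr_snd_lift[OF Q' ac] by (simp add: couplings_def)
qed

context
  fixes c :: "'a \<Rightarrow> 'b \<Rightarrow> real" and c' :: "'c \<Rightarrow> 'e \<Rightarrow> real" and r :: "'b \<Rightarrow> real"
  assumes c: "(\<lambda>z. c (fst z) (snd z)) \<in> borel_measurable (\<mu> \<Otimes>\<^sub>M \<nu>)"
    and c': "(\<lambda>z. c' (fst z) (snd z)) \<in> borel_measurable (A \<Otimes>\<^sub>M B)"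
    and r: "integrable \<nu> r" and c_h: "\<And>a y. c (h a) y = c' a (T\<^sub>2 y) + r y"
begin

lemma AE_coupling_cost_eq:
  assumes Q: "Q \<in> couplings \<mu> \<nu>"
  shows "AE z in Q. c (fst z) (snd z) = c' (T\<^sub>1 (fst z)) (T\<^sub>2 (snd z)) + r (snd z)"
proof -
  have fst_Q: "distr Q \<mu> fst = \<mu>"
    using Q by (simp add: couplings_def)
  have "AE x in distr Q \<mu> fst. h (T\<^sub>1 x) = x"
    unfolding fst_Q by (rule h_T\<^sub>1)
  then have "AE z in Q. h (T\<^sub>1 (fst z)) = fst z"
    by (rule AE_distrD[rotated]) (simp add: measurable_coupling[OF Q])
  then show ?thesis
    by eventually_elim (metis c_h)
qed

lemma cost_integral_distr_coupling:
  assumes Q: "Q \<in> couplings \<mu> \<nu>"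
  shows "cost_integral Q c = cost_integral (distr Q (\<mu>' \<Otimes>\<^sub>M \<nu>') \<Phi>) c' + ereal (\<integral>y. r y \<partial>\<nu>)"
proof -
  have snd_Q: "distr Q \<nu> snd = \<nu>" and [measurable]: "snd \<in> measurable Q \<nu>"
    and \<Phi>_Q: "\<Phi> \<in> measurable Q (\<mu>' \<Otimes>\<^sub>M \<nu>')"
    using Q measurable_\<Phi> by (simp_all add: couplings_def measurable_coupling[OF Q])
  have [measurable]: "r \<in> borel_measurable \<nu>"
    using r by (rule borel_measurable_integrable)
  have c'_\<rho>': "(\<lambda>z. c' (fst z) (snd z)) \<in> borel_measurable (\<mu>' \<Otimes>\<^sub>M \<nu>')"
    unfolding measurable_cong_sets[OF sets_pushforward_product refl] by (rule c')
  have "cost_integral Q c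
      = (if integrable Q (\<lambda>z. c' (T\<^sub>1 (fst z)) (T\<^sub>2 (snd z)))
         then ereal (\<integral>z. c' (T\<^sub>1 (fst z)) (T\<^sub>2 (snd z)) \<partial>Q) else \<infinity>)
        + ereal (\<integral>z. r (snd z) \<partial>Q)"
  proof (rule cost_integral_AE_eq_add[OF AE_coupling_cost_eq[OF Q]])
    show "(\<lambda>z. c (fst z) (snd z)) \<in> borel_measurable Q"
      unfolding measurable_coupling[OF Q] by (rule c)
    show "(\<lambda>z. c' (T\<^sub>1 (fst z)) (T\<^sub>2 (snd z))) \<in> borel_measurable Q"
      using measurable_compose[OF \<Phi>_Q c'_\<rho>'] by simp
    show "integrable Q (\<lambda>z. r (snd z))"
      using r integrable_distr_eq[of snd Q \<nu> r] snd_Q by simp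
  qed
  also have "(if integrable Q (\<lambda>z. c' (T\<^sub>1 (fst z)) (T\<^sub>2 (snd z)))
      then ereal (\<integral>z. c' (T\<^sub>1 (fst z)) (T\<^sub>2 (snd z)) \<partial>Q) else \<infinity>)
      = cost_integral (distr Q (\<mu>' \<Otimes>\<^sub>M \<nu>') \<Phi>) c'"
    using \<Phi>_Q c'_\<rho>' by (simp add: cost_integral_def integrable_distr_eq integral_distr)
  also have "(\<integral>z. r (snd z) \<partial>Q) = (\<integral>y. r y \<partial>\<nu>)"
    using integral_distr[of snd Q \<nu> r] snd_Q by simp
  finally show ?thesis .
qed

lemma OT_ent_pushforward_ge:
  assumes "0 \<le> \<epsilon>"
  shows "OT_ent c' \<epsilon> \<mu>' \<nu>' + ereal (\<integral>y. r y \<partial>\<nu>) \<le> OT_ent c \<epsilon> \<mu> \<nu>"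
  unfolding OT_ent_def[of c]
proof (rule INF_greatest)
  fix Q assume Q: "Q \<in> couplings \<mu> \<nu>"
  let ?Q' = "distr Q (\<mu>' \<Otimes>\<^sub>M \<nu>') \<Phi>"
  have "OT_ent c' \<epsilon> \<mu>' \<nu>' \<le> cost_integral ?Q' c' + ereal \<epsilon> * KL_div ?Q' (\<mu>' \<Otimes>\<^sub>M \<nu>')"
    unfolding OT_ent_def using distr_couplings[OF Q T\<^sub>1 T\<^sub>2] by (rule INF_lower)
  also have "\<dots> \<le> cost_integral ?Q' c' + ereal \<epsilon> * KL_div Q (\<mu> \<Otimes>\<^sub>M \<nu>)"
    using KL_div_distr_coupling_le[OF Q] \<open>0 \<le> \<epsilon>\<close>
    by (intro add_left_mono ereal_mult_left_mono) auto
  finally have "OT_ent c' \<epsilon> \<mu>' \<nu>' + ereal (\<integral>y. r y \<partial>\<nu>)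
      \<le> cost_integral ?Q' c' + ereal \<epsilon> * KL_div Q (\<mu> \<Otimes>\<^sub>M \<nu>) + ereal (\<integral>y. r y \<partial>\<nu>)"
    by (rule add_right_mono)
  then show "OT_ent c' \<epsilon> \<mu>' \<nu>' + ereal (\<integral>y. r y \<partial>\<nu>)
      \<le> cost_integral Q c + ereal \<epsilon> * KL_div Q (\<mu> \<Otimes>\<^sub>M \<nu>)"
    unfolding cost_integral_distr_coupling[OF Q] by (simp add: ac_simps)
qed

lemma OT_ent_pushforward_le:
  assumes "0 < \<epsilon>"
  shows "OT_ent c \<epsilon> \<mu> \<nu> \<le> OT_ent c' \<epsilon> \<mu>' \<nu>' + ereal (\<integral>y. r y \<partial>\<nu>)"
proof -
  have "OT_ent c \<epsilon> \<mu> \<nu> - ereal (\<integral>y. r y \<partial>\<nu>) \<le> OT_ent c' \<epsilon> \<mu>' \<nu>'"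
    unfolding OT_ent_def[of c']
  proof (rule INF_greatest)
    fix Q' assume Q': "Q' \<in> couplings \<mu>' \<nu>'"
    show "OT_ent c \<epsilon> \<mu> \<nu> - ereal (\<integral>y. r y \<partial>\<nu>)
        \<le> cost_integral Q' c' + ereal \<epsilon> * KL_div Q' (\<mu>' \<Otimes>\<^sub>M \<nu>')"
    proof (cases "absolutely_continuous (\<mu>' \<Otimes>\<^sub>M \<nu>') Q'")
      case False
      then have "KL_div Q' (\<mu>' \<Otimes>\<^sub>M \<nu>') = \<infinity>"
        by (simp add: KL_div_def)
      moreover have "cost_integral Q' c' \<noteq> -\<infinity>"
        by (simp add: cost_integral_def)
      ultimately show ?thesis
        using \<open>0 < \<epsilon>\<close> by simp
    next
      case True
      note lift = lift_couplings[OF Q' True]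
      have "OT_ent c \<epsilon> \<mu> \<nu> \<le> cost_integral (lift Q') c + ereal \<epsilon> * KL_div (lift Q') (\<mu> \<Otimes>\<^sub>M \<nu>)"
        unfolding OT_ent_def using lift by (rule INF_lower)
      also have "\<dots> = cost_integral Q' c' + ereal \<epsilon> * KL_div Q' (\<mu>' \<Otimes>\<^sub>M \<nu>') + ereal (\<integral>y. r y \<partial>\<nu>)"
        unfolding cost_integral_distr_coupling[OF lift] distr_lift[OF Q' True] KL_div_lift[OF Q' True]
        by (simp add: ac_simps)
      finally show ?thesis
        by (simp add: ereal_minus_le_iff)
    qed
  qed
  then show ?thesis
    by (simp add: ereal_minus_le_iff)
qed

theorem OT_ent_pushforward:
  assumes "0 < \<epsilon>"
  shows "OT_ent c \<epsilon> \<mu> \<nu> = OT_ent c' \<epsilon> \<mu>' \<nu>' + ereal (\<integral>y. r y \<partial>\<nu>)"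
  using OT_ent_pushforward_le[OF assms] OT_ent_pushforward_ge[OF less_imp_le[OF assms]]
  by (rule antisym)

end

end

section \<open>Orthogonal projections\<close>

lemma borel_measurable_matrix_vector_mult[measurable]:
  fixes A :: "real^'n^'m"
  assumes "f \<in> borel_measurable M"
  shows "(\<lambda>x. A *v f x) \<in> borel_measurable M"
  using measurable_compose[OF assms borel_measurable_continuous_onI
      [OF linear_continuous_on[OF matrix_vector_mul_bounded_linear]]] .

declare transpose_matrix_vector [simp del]

lemma norm_sq_orthonormal_columns:
  fixes U :: "real^'s^'d"
  assumes UU: "transpose U ** U = mat 1"
  shows "(norm (U *v a - w))\<^sup>2
    = (norm (a - transpose U *v w))\<^sup>2 + (norm ((mat 1 - U ** transpose U) *v w))\<^sup>2"
proof -
  define z where "z = transpose U *v w"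
  have adjoint: "inner (U *v x) y = inner x (transpose U *v y)" for x y
    by (metis dot_lmul_matrix vector_transpose_matrix)
  have left_inverse: "transpose U *v (U *v x) = x" for x
    using UU by (simp add: matrix_vector_mul_assoc)
  have "orthogonal (U *v (a - z)) (U *v z - w)"
    unfolding orthogonal_def adjoint
    by (simp add: matrix_vector_mult_diff_distrib left_inverse z_def)
  then have "(norm (U *v a - w))\<^sup>2 = (norm (U *v (a - z)))\<^sup>2 + (norm (U *v z - w))\<^sup>2"
    using norm_add_Pythagorean by (fastforce simp: matrix_vector_mult_diff_distrib)
  also have "norm (U *v (a - z)) = norm (a - z)"
    using adjoint[of "a - z" "U *v (a - z)"] by (simp add: left_inverse norm_eq_sqrt_inner)
  also have "norm (U *v z - w) = norm ((mat 1 - U ** transpose U) *v w)"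
    by (simp add: z_def norm_minus_commute matrix_vector_mult_diff_rdistrib matrix_vector_mul_assoc)
  finally show ?thesis
    by (simp add: z_def)
qed

lemma norm_sq_orthogonal_projection_le:
  fixes U :: "real^'s^'d"
  assumes "transpose U ** U = mat 1"
  shows "(norm ((mat 1 - U ** transpose U) *v w))\<^sup>2 \<le> (norm w)\<^sup>2"
  using norm_sq_orthonormal_columns[OF assms, of 0 w] by simp

lemma norm_diff_sq_le: "(norm (x - y))\<^sup>2 \<le> 2 * (norm x)\<^sup>2 + 2 * (norm (y :: 'a :: real_normed_vector))\<^sup>2"
proof -
  have "(norm (x - y))\<^sup>2 \<le> (norm x + norm y)\<^sup>2"
    by (intro power_mono norm_triangle_ineq4) simp
  also have "\<dots> \<le> 2 * (norm x)\<^sup>2 + 2 * (norm y)\<^sup>2"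
    using zero_le_power2[of "norm x - norm y"] by (simp add: power2_eq_square algebra_simps)
  finally show ?thesis .
qed

lemma sqdist_affine_orthonormal_columns:
  fixes U :: "real^'s^'d"
  assumes "transpose U ** U = mat 1"
  shows "sqdist (U *v a + v) y
    = sqdist a (transpose U *v (y - v)) + (norm ((mat 1 - U ** transpose U) *v (y - v)))\<^sup>2"
  using norm_sq_orthonormal_columns[OF assms, of a "y - v"]
  by (simp add: sqdist_def algebra_simps)

lemma integrable_norm_sq_orthogonal_projection:
  fixes U :: "real^'s^'d" and Y :: "'w \<Rightarrow> real^'d"
  assumes "finite_measure M" and UU: "transpose U ** U = mat 1"
    and [measurable]: "Y \<in> borel_measurable M" and Y: "integrable M (\<lambda>\<omega>. (norm (Y \<omega>))\<^sup>2)"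
  shows "integrable M (\<lambda>\<omega>. (norm ((mat 1 - U ** transpose U) *v (Y \<omega> - v)))\<^sup>2)"
proof (rule Bochner_Integration.integrable_bound)
  interpret finite_measure M by fact
  show "integrable M (\<lambda>\<omega>. 2 * (norm (Y \<omega>))\<^sup>2 + 2 * (norm v)\<^sup>2)"
    using Y by simp
  show "AE \<omega> in M. norm ((norm ((mat 1 - U ** transpose U) *v (Y \<omega> - v)))\<^sup>2)
      \<le> norm (2 * (norm (Y \<omega>))\<^sup>2 + 2 * (norm v)\<^sup>2)"
    using order_trans[OF norm_sq_orthogonal_projection_le[OF UU] norm_diff_sq_le] by simp
qed simp

theorem mainTheorem5:
  fixes M :: "'w measure"
    and X :: "'w \<Rightarrow> real^'s" and Y :: "'w \<Rightarrow> real^'d"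
    and U :: "real^'s^'d" and v :: "real^'d" and \<epsilon> :: real
  assumes "prob_space M"
    and "\<epsilon> > 0"
    and "CARD('s) \<le> CARD('d)"
    and "transpose U ** U = mat 1"
    and "X \<in> borel_measurable M" and "Y \<in> borel_measurable M"
    and "integrable M (\<lambda>\<omega>. (norm (X \<omega>))\<^sup>2)"
    and "integrable M (\<lambda>\<omega>. (norm (Y \<omega>))\<^sup>2)"
  shows "OT_ent sqdist \<epsilon> (distr M borel (\<lambda>\<omega>. U *v X \<omega> + v)) (distr M borel Y)
       = OT_ent sqdist \<epsilon> (distr M borel X) (distr M borel (\<lambda>\<omega>. transpose U *v (Y \<omega> - v)))
         + ereal (\<integral>\<omega>. (norm ((mat 1 - U ** transpose U) *v (Y \<omega> - v)))\<^sup>2 \<partial>M)"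
proof -
  interpret M: prob_space M by fact
  note UU = \<open>transpose U ** U = mat 1\<close>
  note [measurable] = \<open>X \<in> borel_measurable M\<close> \<open>Y \<in> borel_measurable M\<close>
  define T where "T = (\<lambda>y. transpose U *v (y - v))"
  define h where "h = (\<lambda>a. U *v a + v)"
  define r where "r = (\<lambda>y. (norm ((mat 1 - U ** transpose U) *v (y - v)))\<^sup>2)"
  have [measurable]: "T \<in> borel_measurable borel" "h \<in> borel_measurable borel"
    "r \<in> borel_measurable borel"
    by (simp_all add: T_def h_def r_def)
  have T_h: "T (h a) = a" for a
    using UU by (simp add: T_def h_def matrix_vector_mul_assoc)
  interpret OT_pushforward "distr M borel (\<lambda>\<omega>. h (X \<omega>))" "distr M borel Y" borel borel T T h
    by (rule OT_pushforward.intro) (simp_all add: M.prob_space_distr AE_distr_iff T_h)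
  have "integrable (distr M borel Y) r"
    using integrable_norm_sq_orthogonal_projection[OF M.finite_measure_axioms UU _ assms(8), of v]
    by (simp add: integrable_distr_eq r_def)
  moreover have "sqdist (h a) y = sqdist a (T y) + r y" for a y
    unfolding T_def h_def r_def by (rule sqdist_affine_orthonormal_columns[OF UU])
  ultimately have "OT_ent sqdist \<epsilon> (distr M borel (\<lambda>\<omega>. h (X \<omega>))) (distr M borel Y)
      = OT_ent sqdist \<epsilon> (distr (distr M borel (\<lambda>\<omega>. h (X \<omega>))) borel T) (distr (distr M borel Y) borel T)
        + ereal (\<integral>y. r y \<partial>distr M borel Y)"
    using \<open>\<epsilon> > 0\<close> by (intro OT_ent_pushforward) (simp_all add: sqdist_def)
  then show ?thesis
    by (simp add: distr_distr comp_def T_h integral_distr) (simp add: T_def h_def r_def)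
qed

end
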